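(* Let $n\geq 5$. Let $S_n^+$ be any graph obtained from the star $S_n$ on $n$ vertices by adding one new edge (joining two leaves), and let $S_n^{++}$ be any graph obtained from $S_n^+$ by adding one further new edge (joining two nonadjacent vertices of $S_n^+$). Then $px_k(S_n^{++})\leq n-3$ for each integer $k$ with $3\leq k\leq n$.
   Context: All graphs are finite, simple, undirected and connected. An edge-coloring of a graph assigns a color to each edge (adjacent edges may receive the same color). A tree in an edge-colored graph is proper if any two adjacent edges of the tree receive different colors. For $S\subseteq V(G)$, an $S$-tree is a subgraph of $G$ that is a tree containing all vertices of $S$. For a connected graph $G$ of order $n$ and an integer $k$ with $2\le k\le n$, an edge-coloring of $G$ is a $k$-proper coloring if for every set $S$ of $k$ vertices of $G$ there exists a proper $S$-tree in $G$. The $k$-proper index $px_k(G)$ is the minimum number of colors used in a $k$-proper coloring of $G$. The star $S_n$ is the tree $K_{1,n-1}$ on $n$ vertices. *)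

theory Defs
  imports Main
begin

definition simple_graph :: "'a set \<Rightarrow> 'a set set \<Rightarrow> bool" where
  "simple_graph V E \<longleftrightarrow> finite V \<and> (\<forall>e\<in>E. e \<subseteq> V \<and> card e = 2)"

definition reach :: "'a set set \<Rightarrow> 'a \<Rightarrow> 'a \<Rightarrow> bool" where
  "reach F u w \<longleftrightarrow> (u, w) \<in> {(x, y). {x, y} \<in> F}\<^sup>*"

definition connected_graph :: "'a set \<Rightarrow> 'a set set \<Rightarrow> bool" where
  "connected_graph V E \<longleftrightarrow> V \<noteq> {} \<and> (\<forall>u\<in>V. \<forall>w\<in>V. reach E u w)"

text \<open>Acyclic: no edge lies on a cycle, i.e. the endpoints of each edge are not
  connected after deleting that edge.\<close>
definition acyclic_edges :: "'a set set \<Rightarrow> bool" where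
  "acyclic_edges F \<longleftrightarrow> (\<forall>u w. {u, w} \<in> F \<longrightarrow> \<not> reach (F - {{u, w}}) u w)"

definition subtree :: "'a set \<Rightarrow> 'a set set \<Rightarrow> 'a set \<Rightarrow> 'a set set \<Rightarrow> bool" where
  "subtree V E TV TE \<longleftrightarrow> TV \<subseteq> V \<and> TE \<subseteq> E \<and> (\<forall>e\<in>TE. e \<subseteq> TV)
     \<and> connected_graph TV TE \<and> acyclic_edges TE"

definition proper_edges :: "('a set \<Rightarrow> nat) \<Rightarrow> 'a set set \<Rightarrow> bool" where
  "proper_edges c TE \<longleftrightarrow> (\<forall>e\<in>TE. \<forall>f\<in>TE. e \<noteq> f \<and> e \<inter> f \<noteq> {} \<longrightarrow> c e \<noteq> c f)"

definition k_proper_coloring :: "'a set \<Rightarrow> 'a set set \<Rightarrow> nat \<Rightarrow> ('a set \<Rightarrow> nat) \<Rightarrow> bool" where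
  "k_proper_coloring V E k c \<longleftrightarrow>
     (\<forall>S. S \<subseteq> V \<and> card S = k \<longrightarrow>
        (\<exists>TV TE. subtree V E TV TE \<and> S \<subseteq> TV \<and> proper_edges c TE))"

definition proper_index :: "'a set \<Rightarrow> 'a set set \<Rightarrow> nat \<Rightarrow> nat" where
  "proper_index V E k = (LEAST m. \<exists>c. k_proper_coloring V E k c \<and> card (c ` E) = m)"

definition star_edges :: "'a set \<Rightarrow> 'a \<Rightarrow> 'a set set" where
  "star_edges V v = {{v, u} | u. u \<in> V - {v}}"

end

theory Submission
  imports Defs
begin

text \<open>Remove from the star the edges to two vertices p and q and re-attach p and q as
  pendant vertices through the two added edges {r, p} = {a, b} and {s, q} = {x, y}; this is
  possible with q outside {a, b}. The result is a spanning tree. Its n - 3 star edges get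
  distinct colours, and each pendant edge meets only one earlier edge, so n - 3 \<ge> 2 colours
  suffice to make it proper. A proper spanning tree is a proper S-tree for every S.\<close>

lemma reach_refl: "reach F u u"
  unfolding reach_def by auto

lemma reach_edge: "{u, w} \<in> F \<Longrightarrow> reach F u w"
  unfolding reach_def by auto

lemma reach_trans: "reach F u w \<Longrightarrow> reach F w z \<Longrightarrow> reach F u z"
  unfolding reach_def by (rule rtrancl_trans)

lemma reach_sym: "reach F u w \<Longrightarrow> reach F w u"
proof -
  let ?R = "{(x, y). {x, y} \<in> F}"
  have R_sym: "?R\<inverse> = ?R" by (auto simp: insert_commute)
  assume "reach F u w"
  then have "(w, u) \<in> (?R\<inverse>)\<^sup>*" unfolding reach_def by (simp add: rtrancl_converseI)
  then show ?thesis unfolding reach_def R_sym .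
qed

lemma reach_mono: "F \<subseteq> G \<Longrightarrow> reach F u w \<Longrightarrow> reach G u w"
  unfolding reach_def by (erule rtrancl_mono[THEN subsetD, rotated]) auto

lemma reach_in_Union: "reach F u w \<Longrightarrow> u \<noteq> w \<Longrightarrow> w \<in> \<Union>F"
  unfolding reach_def by (erule rtranclE) auto

text \<open>A walk through a vertex p that is only incident to the new edge {r, p} must
  end at p right after using that edge, so otherwise the edge can be skipped.\<close>
lemma reach_insert_pendant:
  assumes "p \<notin> \<Union>F" "u \<noteq> p" "r \<noteq> p" "reach (insert {r, p} F) u w"
  shows "(w \<noteq> p \<longrightarrow> reach F u w) \<and> (w = p \<longrightarrow> reach F u r)"
  using assms(4) unfolding reach_def
proof (induction rule: rtrancl_induct)
  case base
  then show ?case using assms(2) by auto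
next
  case (step y z)
  show ?case
  proof (cases "{y, z} = {r, p}")
    case True
    then have "(y = r \<and> z = p) \<or> (y = p \<and> z = r)" by (auto simp: doubleton_eq_iff)
    then show ?thesis using step assms(3) by auto
  next
    case False
    then have yz: "{y, z} \<in> F" using step by auto
    then have "y \<noteq> p" "z \<noteq> p" using assms(1) by auto
    then show ?thesis using step yz by (auto intro: rtrancl_into_rtrancl)
  qed
qed

definition tree :: "'a set \<Rightarrow> 'a set set \<Rightarrow> bool" where
  "tree TV TE \<longleftrightarrow> connected_graph TV TE \<and> acyclic_edges TE \<and> (\<forall>e\<in>TE. e \<subseteq> TV)"

lemma subtree_iff_tree: "subtree V E TV TE \<longleftrightarrow> TV \<subseteq> V \<and> TE \<subseteq> E \<and> tree TV TE"
  unfolding subtree_def tree_def by auto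

lemma connected_graph_insert_pendant:
  assumes con: "connected_graph TV TE" and r: "r \<in> TV"
  shows "connected_graph (insert p TV) (insert {r, p} TE)"
proof -
  let ?F = "insert {r, p} TE"
  have rp: "reach ?F r p" "reach ?F p r" by (auto intro: reach_edge simp: insert_commute)
  have old: "reach ?F u w" if "u \<in> TV" "w \<in> TV" for u w
    using con that unfolding connected_graph_def by (auto intro: reach_mono[of TE])
  have "reach ?F u w" if "u \<in> insert p TV" "w \<in> insert p TV" for u w
    using that old[OF _ r] old[OF r] rp reach_refl[of ?F p] by (blast intro: reach_trans)
  then show ?thesis unfolding connected_graph_def by blast
qed

lemma acyclic_edges_insert_pendant:
  assumes ac: "acyclic_edges TE" and p: "p \<notin> \<Union>TE" and rp: "r \<noteq> p"
  shows "acyclic_edges (insert {r, p} TE)"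
  unfolding acyclic_edges_def
proof (intro allI impI notI)
  let ?F = "insert {r, p} TE"
  fix u w assume uw: "{u, w} \<in> ?F" and re: "reach (?F - {{u, w}}) u w"
  show False
  proof (cases "{u, w} = {r, p}")
    case True
    then have "?F - {{u, w}} \<subseteq> TE" by auto
    then have "reach TE u w" using re by (rule reach_mono)
    moreover have "(u = r \<and> w = p) \<or> (u = p \<and> w = r)"
      using True by (auto simp: doubleton_eq_iff)
    ultimately have "reach TE r p" using reach_sym[of TE p r] by blast
    then have "p \<in> \<Union>TE" using rp by (rule reach_in_Union)
    then show False using p by contradiction
  next
    case False
    then have inT: "{u, w} \<in> TE" using uw by auto
    then have u: "u \<noteq> p" and w: "w \<noteq> p" using p by auto
    have "?F - {{u, w}} = insert {r, p} (TE - {{u, w}})" using False by auto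
    moreover have "p \<notin> \<Union>(TE - {{u, w}})" using p by auto
    ultimately have "reach (TE - {{u, w}}) u w"
      using reach_insert_pendant[of p "TE - {{u, w}}" u r w] u w rp re by simp
    then show False using ac inT unfolding acyclic_edges_def by auto
  qed
qed

lemma tree_insert_pendant:
  assumes "tree TV TE" "r \<in> TV" "p \<notin> TV"
  shows "tree (insert p TV) (insert {r, p} TE)"
proof -
  have "p \<notin> \<Union>TE" using assms unfolding tree_def by auto
  then show ?thesis using assms
    by (auto simp: tree_def intro: connected_graph_insert_pendant acyclic_edges_insert_pendant)
qed

lemma star_edges_eq_image: "star_edges V v = (\<lambda>u. {v, u}) ` (V - {v})"
  unfolding star_edges_def by blast

lemma tree_star_edges:
  assumes "finite V" "v \<in> V"
  shows "tree V (star_edges V v)"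
proof -
  have "tree (insert v W) ((\<lambda>u. {v, u}) ` W)" if "finite W" "v \<notin> W" for W
    using that
  proof (induction W rule: finite_induct)
    case empty
    then show ?case by (auto simp: tree_def connected_graph_def acyclic_edges_def reach_refl)
  next
    case (insert z W)
    then have "tree (insert z (insert v W)) (insert {v, z} ((\<lambda>u. {v, u}) ` W))"
      by (intro tree_insert_pendant) auto
    then show ?case by (simp add: insert_commute)
  qed
  from this[of "V - {v}"] show ?thesis
    using assms by (simp add: star_edges_eq_image insert_absorb)
qed

lemma proper_edges_inj_on: "inj_on c TE \<Longrightarrow> proper_edges c TE"
  unfolding proper_edges_def inj_on_def by blast

lemma proper_edges_insert_pendant:
  assumes "proper_edges c TE" "p \<notin> \<Union>TE" "\<forall>e\<in>TE. r \<in> e \<longrightarrow> c e \<noteq> i"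
  shows "proper_edges (c({r, p} := i)) (insert {r, p} TE)"
proof -
  have "{r, p} \<notin> TE" using assms(2) by auto
  then show ?thesis using assms unfolding proper_edges_def by (auto simp: fun_upd_def)
qed

text \<open>The colouring is made constant on the edges outside the tree so that it uses no
  colours besides those of the tree.\<close>
lemma proper_index_le_spanning_tree:
  assumes "subtree V E V T" "finite T" "T \<noteq> {}" "proper_edges c T"
  shows "proper_index V E k \<le> card (c ` T)"
proof -
  obtain e0 where e0: "e0 \<in> T" using assms(3) by auto
  define c' where "c' e = (if e \<in> T then c e else c e0)" for e
  have "proper_edges c' T" using assms(4) unfolding proper_edges_def c'_def by auto
  then have "k_proper_coloring V E k c'"
    using assms(1) unfolding k_proper_coloring_def by blast
  then have "proper_index V E k \<le> card (c' ` E)"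
    unfolding proper_index_def by (intro Least_le) blast
  also have "\<dots> \<le> card (c ` T)"
    by (rule card_mono) (use assms(2) e0 in \<open>auto simp: c'_def\<close>)
  finally show ?thesis .
qed

lemma tree_star_two_pendants:
  assumes "finite V" "v \<in> V" "p \<in> V" "q \<in> V" "v \<noteq> p" "v \<noteq> q" "p \<noteq> q"
    and "r \<in> V - {p, q}" and "s \<in> V - {q}"
  shows "tree V (insert {s, q} (insert {r, p} (star_edges (V - {p, q}) v)))"
proof -
  have "tree (V - {p, q}) (star_edges (V - {p, q}) v)"
    by (rule tree_star_edges) (use assms in auto)
  then have "tree (insert p (V - {p, q})) (insert {r, p} (star_edges (V - {p, q}) v))"
    by (rule tree_insert_pendant) (use assms in auto)
  then have "tree (insert q (insert p (V - {p, q})))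
      (insert {s, q} (insert {r, p} (star_edges (V - {p, q}) v)))"
    by (rule tree_insert_pendant) (use assms in auto)
  moreover have "insert q (insert p (V - {p, q})) = V" using assms by auto
  ultimately show ?thesis by simp
qed

lemma exists_less_neq: "2 \<le> m \<Longrightarrow> \<exists>i<m. i \<noteq> (j::nat)"
  by (rule exI[of _ "if j = 0 then 1 else 0"]) auto

lemma proper_coloring_star_two_pendants:
  assumes fin: "finite V" and card: "card V \<ge> 5"
    and V: "v \<in> V" "p \<in> V" "q \<in> V" "v \<noteq> p" "v \<noteq> q" "p \<noteq> q"
    and r: "r \<in> V - {v, p, q}" and s: "s \<in> V - {v, q, r}"
  obtains c where "proper_edges c (insert {s, q} (insert {r, p} (star_edges (V - {p, q}) v)))"
    and "c ` insert {s, q} (insert {r, p} (star_edges (V - {p, q}) v)) \<subseteq> {..<card V - 3}"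
proof -
  define W where "W = V - {v, p, q}"
  define m where "m = card V - 3"
  let ?S = "star_edges (V - {p, q}) v"
  have m2: "2 \<le> m" using card m_def by auto
  have S_eq: "?S = (\<lambda>u. {v, u}) ` W" by (auto simp: star_edges_eq_image W_def)
  have "inj_on (\<lambda>u. {v, u}) W" by (auto simp: inj_on_def doubleton_eq_iff)
  moreover have "card W = m"
    unfolding W_def m_def using fin V by (subst card_Diff_subset) auto
  ultimately have "card ?S = m" by (simp add: S_eq card_image)
  then obtain c0 where c0: "bij_betw c0 ?S {..<m}"
    using finite_same_card_bij[of ?S "{..<m}"] fin by (auto simp: S_eq W_def)
  have c0_proper: "proper_edges c0 ?S"
    using c0 by (auto intro: proper_edges_inj_on bij_betw_imp_inj_on)
  obtain i1 where i1: "i1 < m" "i1 \<noteq> c0 {v, r}" using exists_less_neq[OF m2] by blast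
  define c1 where "c1 = c0({r, p} := i1)"
  have "\<forall>e\<in>?S. r \<in> e \<longrightarrow> e = {v, r}" using r by (auto simp: S_eq W_def)
  then have c1: "proper_edges c1 (insert {r, p} ?S)"
    unfolding c1_def using c0_proper i1 V
    by (intro proper_edges_insert_pendant) (auto simp: S_eq W_def)
  define e_s where "e_s = (if s = p then {r, p} else {v, s})"
  have edges_at_s: "\<forall>e\<in>insert {r, p} ?S. s \<in> e \<longrightarrow> e = e_s"
    using r s V by (auto simp: S_eq W_def e_s_def)
  obtain i2 where i2: "i2 < m" "i2 \<noteq> c1 e_s" using exists_less_neq[OF m2] by blast
  define c where "c = c1({s, q} := i2)"
  have "proper_edges c (insert {s, q} (insert {r, p} ?S))"
    unfolding c_def using c1 i2 edges_at_s r V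
    by (intro proper_edges_insert_pendant) (auto simp: S_eq W_def)
  moreover have "c ` insert {s, q} (insert {r, p} ?S) \<subseteq> {..<m}"
    using bij_betw_imp_surj_on[OF c0] i1 i2 by (auto simp: c_def c1_def)
  ultimately show ?thesis using that m_def by blast
qed

lemma orient_two_edges:
  assumes "a \<noteq> b" "x \<noteq> y" "{x, y} \<noteq> {a, b}"
  obtains p q r s where "{r, p} = {a, b}" "{s, q} = {x, y}" "q \<notin> {a, b}" "s \<noteq> r"
proof (cases "y \<in> {a, b}")
  case True
  then have x: "x \<notin> {a, b}" using assms by (auto simp: doubleton_eq_iff)
  show ?thesis
  proof (cases "y = a")
    case True
    then show ?thesis
      using x assms that[where p = a and q = x and r = b and s = y] by (auto simp: insert_commute)
  next
    case False
    then show ?thesis using \<open>y \<in> {a, b}\<close> x assms that[where p = b and q = x and r = a and s = y]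
      by (auto simp: insert_commute)
  qed
next
  case False
  show ?thesis
  proof (cases "x = a")
    case True
    then show ?thesis
      using False assms that[where p = a and q = y and r = b and s = x] by (auto simp: insert_commute)
  next
    case False
    then show ?thesis
      using \<open>y \<notin> {a, b}\<close> assms that[where p = b and q = y and r = a and s = x] by auto
  qed
qed

theorem mainTheorem15:
  fixes V :: "'a set" and v a b x y :: 'a and n k :: nat
  assumes "finite V" and "card V = n" and "n \<ge> 5" and "v \<in> V"
    and "a \<in> V - {v}" and "b \<in> V - {v}" and "a \<noteq> b"
    and "x \<in> V" and "y \<in> V" and "x \<noteq> y"
    and "{x, y} \<notin> star_edges V v \<union> {{a, b}}"
    and "3 \<le> k" and "k \<le> n"
  shows "proper_index V (star_edges V v \<union> {{a, b}, {x, y}}) k \<le> n - 3"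
proof -
  let ?E = "star_edges V v \<union> {{a, b}, {x, y}}"
  have "x \<noteq> v" "y \<noteq> v"
    using assms(8-11) by (auto simp: star_edges_def insert_commute)
  obtain p q r s where
    rp: "{r, p} = {a, b}" and sq: "{s, q} = {x, y}" and "q \<notin> {a, b}" "s \<noteq> r"
    using orient_two_edges assms(7,10,11) by blast
  have "r \<in> {a, b}" "p \<in> {a, b}" "r \<noteq> p" using rp assms(7) by (auto simp: doubleton_eq_iff)
  moreover have "s \<in> {x, y}" "q \<in> {x, y}" "s \<noteq> q"
    using sq assms(10) by (auto simp: doubleton_eq_iff)
  ultimately have V: "v \<in> V" "p \<in> V" "q \<in> V" "v \<noteq> p" "v \<noteq> q" "p \<noteq> q"
    and r: "r \<in> V - {v, p, q}" and s: "s \<in> V - {v, q, r}"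
    using assms(4-9) \<open>x \<noteq> v\<close> \<open>y \<noteq> v\<close> \<open>q \<notin> {a, b}\<close> \<open>s \<noteq> r\<close> by auto
  let ?T = "insert {s, q} (insert {r, p} (star_edges (V - {p, q}) v))"
  have "tree V ?T" using tree_star_two_pendants[OF assms(1) V] r s by blast
  moreover have "?T \<subseteq> ?E" unfolding rp sq by (auto simp: star_edges_def)
  ultimately have "subtree V ?E V ?T" by (simp add: subtree_iff_tree)
  moreover have "finite ?T" using assms(1) by (simp add: star_edges_eq_image)
  moreover obtain c where "proper_edges c ?T" and c: "c ` ?T \<subseteq> {..<n - 3}"
    using proper_coloring_star_two_pendants[OF assms(1) _ V r s] assms(2,3) by blast
  ultimately have "proper_index V ?E k \<le> card (c ` ?T)"
    by (intro proper_index_le_spanning_tree) auto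
  also have "\<dots> \<le> n - 3" using card_mono[OF _ c] by simp
  finally show ?thesis .
qed

end
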